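(* Let $k\geq1$ be an integer and let $\psi\in\Psi_{2k+2}$. For $d\in\{2,2k+2\}$ let $b_{n,d}$ denote the $d$-dimensional Schoenberg coefficients of $\psi$; in particular $b_{n,2}$ are its Legendre coefficients, i.e. $\psi(\theta)=\sum_{n\ge0}b_{n,2}P_n(\cos\theta)$. Then for every integer $n\ge0$, \[ b_{n,2k+2}=\sum_{i=0}^k u_i(n,k)\,b_{n+2i,2}, \] where \[ u_i(n,k)=(-1)^i\frac{(2k-1)!!}{2^k}\binom{k}{i}\binom{2k+n}{n}\frac{1}{(n+i+1/2)_{(k-i)}\,(n+k+3/2)_{(i)}}. \]
   Context: For an integer $d\ge1$, $\mathbb{S}^d=\{x\in\mathbb{R}^{d+1}:\|x\|=1\}$ and $\theta(x,y)=\arccos(\langle x,y\rangle)$ is the great circle distance. $\Psi_d$ denotes the class of continuous functions $\psi:[0,\pi]\to\mathbb{R}$ with $\psi(0)=1$ such that $(x,y)\mapsto\psi(\theta(x,y))$ is positive definite on $\mathbb{S}^d$, i.e. $\sum_{i,j=1}^m c_ic_j\psi(\theta(x_i,x_j))\ge0$ for all $m\ge1$, all real $c_1,\dots,c_m$ and all distinct $x_1,\dots,x_m\in\mathbb{S}^d$. One has $\Psi_1\supset\Psi_2\supset\cdots$, and (Schoenberg) $\psi\in\Psi_d$ iff $\psi(\theta)=\sum_{n=0}^\infty b_{n,d}\,\frac{C_n^{(d-1)/2}(\cos\theta)}{C_n^{(d-1)/2}(1)}$ for unique coefficients $b_{n,d}\ge0$ with $\sum_n b_{n,d}=1$; these $b_{n,d}$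 are the $d$-dimensional Schoenberg coefficients of $\psi$. Here $C_n^\lambda$ are Gegenbauer polynomials, and $C_n^{1/2}=P_n$ are the Legendre polynomials (with $P_n(1)=1$). Notation: $(2k-1)!!=\prod_{j=1}^k(2j-1)$, and $(x)_{(m)}=x(x+1)\cdots(x+m-1)$ is the Pochhammer symbol (with $(x)_{(0)}=1$). *)

theory Defs
  imports "HOL-Analysis.Analysis"
begin

definition sphere_pts :: "nat \<Rightarrow> (nat \<Rightarrow> real) set" where
  "sphere_pts d = {x. (\<forall>i>d. x i = 0) \<and> (\<Sum>i\<le>d. (x i)\<^sup>2) = 1}"

definition gc_dist :: "nat \<Rightarrow> (nat \<Rightarrow> real) \<Rightarrow> (nat \<Rightarrow> real) \<Rightarrow> real" where
  "gc_dist d x y = arccos (\<Sum>i\<le>d. x i * y i)"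

definition Psi :: "nat \<Rightarrow> (real \<Rightarrow> real) set" where
  "Psi d = {\<psi>. continuous_on {0..pi} \<psi> \<and> \<psi> 0 = 1 \<and>
     (\<forall>(m::nat) (c::nat \<Rightarrow> real) (X::nat \<Rightarrow> nat \<Rightarrow> real).
        m \<ge> 1 \<and> (\<forall>i<m. X i \<in> sphere_pts d) \<and> inj_on X {..<m} \<longrightarrow>
        (\<Sum>i<m. \<Sum>j<m. c i * c j * \<psi> (gc_dist d (X i) (X j))) \<ge> 0)}"

definition gegenbauer :: "real \<Rightarrow> nat \<Rightarrow> real \<Rightarrow> real" where
  "gegenbauer lam n x = (\<Sum>j\<le>n div 2. (-1)^j * pochhammer lam (n - j)
       / (fact j * fact (n - 2*j)) * (2*x)^(n - 2*j))"

definition norm_gegenbauer :: "nat \<Rightarrow> nat \<Rightarrow> real \<Rightarrow> real" where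
  "norm_gegenbauer d n x =
     gegenbauer ((real d - 1) / 2) n x / gegenbauer ((real d - 1) / 2) n 1"

definition schoenberg_coeffs :: "nat \<Rightarrow> (real \<Rightarrow> real) \<Rightarrow> (nat \<Rightarrow> real) \<Rightarrow> bool" where
  "schoenberg_coeffs d \<psi> b \<longleftrightarrow> (\<forall>n. b n \<ge> 0) \<and> b sums 1 \<and>
     (\<forall>\<theta>\<in>{0..pi}. (\<lambda>n. b n * norm_gegenbauer d n (cos \<theta>)) sums \<psi> \<theta>)"

definition odd_dfact :: "nat \<Rightarrow> real" where
  "odd_dfact k = (\<Prod>j=1..k. 2 * real j - 1)"

definition u_coeff :: "nat \<Rightarrow> nat \<Rightarrow> nat \<Rightarrow> real" where
  "u_coeff i n k = (-1)^i * odd_dfact k / 2^k * real (k choose i) * real ((2*k+n) choose n)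
      / (pochhammer (real n + real i + 1/2) (k - i) * pochhammer (real n + real k + 3/2) i)"

end

theory Submission
  imports Defs "HOL-Computational_Algebra.Polynomial"
begin

text \<open>The d-dimensional Schoenberg expansion of \<psi> is an expansion in the normalized Gegenbauer
  polynomials C(l, n, cos \<theta>) / C(l, n, 1) with l = (d - 1)/2. Iterating the lowering relation
  (n + l) C(l, n) = l (C(l + 1, n) - C(l + 1, n - 2)) k times writes the Legendre polynomial
  P_N = C(1/2, N) as a combination of the C(k + 1/2, N - 2i), i \<le> k, whose normalized
  coefficients are the u_i. Integrate both expansions of \<psi>(arccos x) against
  (1 - x^2)^k C(k + 1/2, n, x), termwise by the Weierstrass M-test. As the C(k + 1/2, m) are
  orthogonal for the weight (1 - x^2)^k, the (2k+2)-dimensional expansion yields b_{n,2k+2} times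
  the squared norm of C(k + 1/2, n), and the Legendre expansion yields the sum of the
  u_i b_{n+2i,2} times the same norm.\<close>

section \<open>Gegenbauer polynomials\<close>

definition gegenbauer_coeff :: "real \<Rightarrow> nat \<Rightarrow> nat \<Rightarrow> real" where
  "gegenbauer_coeff l n m =
     (if m \<le> n \<and> even (n - m)
      then (-1)^((n - m) div 2) * pochhammer l (n - (n - m) div 2) * 2^m / (fact ((n - m) div 2) * fact m)
      else 0)"

definition gegenbauer_poly :: "real \<Rightarrow> nat \<Rightarrow> real poly" where
  "gegenbauer_poly l n = (\<Sum>m\<le>n. monom (gegenbauer_coeff l n m) m)"

lemma gegenbauer_coeff_eq_0:
  "\<not> (m \<le> n \<and> even (n - m)) \<Longrightarrow> gegenbauer_coeff l n m = 0"
  unfolding gegenbauer_coeff_def by (rule if_not_P)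

lemma gegenbauer_coeff_add_double:
  "gegenbauer_coeff l (m + 2*j) m = (-1)^j * pochhammer l (m + j) * 2^m / (fact j * fact m)"
  by (simp add: gegenbauer_coeff_def add.commute)

lemma coeff_gegenbauer_poly: "coeff (gegenbauer_poly l n) m = gegenbauer_coeff l n m"
  by (simp add: gegenbauer_poly_def coeff_sum coeff_monom gegenbauer_coeff_eq_0)

lemma poly_gegenbauer_poly: "poly (gegenbauer_poly l n) x = gegenbauer l n x"
proof -
  have "poly (gegenbauer_poly l n) x = (\<Sum>m\<le>n. gegenbauer_coeff l n m * x^m)"
    by (simp add: gegenbauer_poly_def poly_sum poly_monom)
  also have "\<dots> = (\<Sum>m\<in>(\<lambda>j. n - 2*j) ` {..n div 2}. gegenbauer_coeff l n m * x^m)"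
  proof (rule sum.mono_neutral_right)
    show "\<forall>m\<in>{..n} - (\<lambda>j. n - 2*j) ` {..n div 2}. gegenbauer_coeff l n m * x^m = 0"
    proof
      fix m assume m: "m \<in> {..n} - (\<lambda>j. n - 2*j) ` {..n div 2}"
      have "odd (n - m)"
      proof
        assume "even (n - m)"
        then obtain j where "n - m = 2*j" by blast
        moreover have "j \<le> n div 2" "m = n - 2*j" using m \<open>n - m = 2*j\<close> by auto
        ultimately show False using m by blast
      qed
      then show "gegenbauer_coeff l n m * x^m = 0" by (simp add: gegenbauer_coeff_eq_0)
    qed
  qed auto
  also have "\<dots> = (\<Sum>j\<le>n div 2. gegenbauer_coeff l n (n - 2*j) * x^(n - 2*j))"
    by (rule sum.reindex_cong[of "\<lambda>j. n - 2*j"]) (auto simp: inj_on_def)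
  also have "\<dots> = gegenbauer l n x"
    unfolding gegenbauer_def
  proof (rule sum.cong)
    fix j assume "j \<in> {..n div 2}"
    then have "2*j \<le> n" by auto
    then obtain m where m: "n = m + 2*j" by (metis le_add_diff_inverse2)
    show "gegenbauer_coeff l n (n - 2*j) * x^(n - 2*j)
        = (-1)^j * pochhammer l (n - j) / (fact j * fact (n - 2*j)) * (2*x)^(n - 2*j)"
      by (simp add: m gegenbauer_coeff_add_double power_mult_distrib add.commute)
  qed simp
  finally show ?thesis .
qed

lemma gegenbauer_coeff_ode_rec:
  "real ((m+2)*(m+1)) * gegenbauer_coeff l n (m+2)
     = (real m * (real m + 2*l) - real n * (real n + 2*l)) * gegenbauer_coeff l n m"
proof (cases "m + 2 \<le> n \<and> even (n - m)")
  case True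
  then have "even (n - (m+2))" by presburger
  then obtain i where "n - (m+2) = 2*i" by (meson evenE)
  with True have n: "n = (m+2) + 2*i" by linarith
  define B where "B = (-1)^i * pochhammer l (m+i+1) * 2^m / (fact i * fact m)"
  have "pochhammer l (m + 2 + i) = (l + real (m+i+1)) * pochhammer l (m + i + 1)"
    using pochhammer_rec'[of l "m+i+1"] by (simp add: add_ac)
  then have "gegenbauer_coeff l n (m+2) = 4 * (l + real (m+i+1)) * B / real ((m+2)*(m+1))"
    unfolding n gegenbauer_coeff_add_double B_def by (simp add: fact_Suc field_simps power_add)
  then have high: "real ((m+2)*(m+1)) * gegenbauer_coeff l n (m+2) = 4 * (l + real (m+i+1)) * B"
    by (simp del: of_nat_mult)
  have "gegenbauer_coeff l n m = (-1)^(Suc i) * pochhammer l (m+i+1) * 2^m / (fact (Suc i) * fact m)"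
    using gegenbauer_coeff_add_double[of l m "Suc i"] unfolding n by (simp add: add_ac)
  then have low: "gegenbauer_coeff l n m = - B / real (Suc i)"
    unfolding B_def by (simp add: fact_Suc field_simps)
  have eigen_diff: "real m * (real m + 2*l) - real n * (real n + 2*l) = - 4 * real (Suc i) * (l + real (m+i+1))"
    unfolding n by (simp add: algebra_simps)
  have "(- 4 * real (Suc i) * (l + real (m+i+1))) * (- B / real (Suc i)) = 4 * (l + real (m+i+1)) * B"
    by (simp add: field_simps)
  then show ?thesis unfolding high low eigen_diff by (rule sym)
next
  case False
  show ?thesis
  proof (cases "n = m")
    case True
    then show ?thesis by (simp add: gegenbauer_coeff_eq_0)
  next
    case False
    with \<open>\<not> (m + 2 \<le> n \<and> even (n - m))\<close>
    have "\<not> (m \<le> n \<and> even (n - m))" "\<not> (m + 2 \<le> n \<and> even (n - (m + 2)))"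
      by presburger+
    then show ?thesis by (simp add: gegenbauer_coeff_eq_0)
  qed
qed

lemma gegenbauer_coeff_Suc_deriv:
  "real (Suc m) * gegenbauer_coeff l (Suc n) (Suc m) = 2*l * gegenbauer_coeff (l+1) n m"
proof (cases "m \<le> n \<and> even (n - m)")
  case True
  then obtain j where n: "n = m + 2*j" by (metis dvd_def le_add_diff_inverse)
  have "gegenbauer_coeff l (Suc n) (Suc m) = (-1)^j * pochhammer l (Suc m + j) * 2^(Suc m) / (fact j * fact (Suc m))"
    using gegenbauer_coeff_add_double[of l "Suc m" j] unfolding n by simp
  then show ?thesis
    unfolding n gegenbauer_coeff_add_double by (simp add: pochhammer_rec fact_Suc field_simps del: of_nat_Suc)
next
  case False
  then show ?thesis by (simp add: gegenbauer_coeff_eq_0)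
qed

lemma gegenbauer_coeff_lower:
  "(real n + l) * gegenbauer_coeff l n m
     = l * (gegenbauer_coeff (l+1) n m - (if 2 \<le> n then gegenbauer_coeff (l+1) (n-2) m else 0))"
proof (cases "m \<le> n \<and> even (n - m)")
  case True
  then obtain j where n: "n = m + 2*j" by (metis dvd_def le_add_diff_inverse)
  show ?thesis
  proof (cases j)
    case 0
    have "(real m + l) * pochhammer l m = l * pochhammer (l+1) m"
      using pochhammer_rec'[of l m] pochhammer_rec[of l m] by (simp add: add_ac)
    then show ?thesis
      using gegenbauer_coeff_add_double[of l m 0] gegenbauer_coeff_add_double[of "l+1" m 0]
      by (simp add: n 0 gegenbauer_coeff_eq_0 add.commute)
  next
    case (Suc i)
    define B where "B = (-1)^i * pochhammer (l+1) (m+i) * 2^m / (fact i * fact m)"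
    have "pochhammer l (m + Suc i) = l * pochhammer (l+1) (m+i)"
      using pochhammer_rec[of l "m+i"] by simp
    then have low: "gegenbauer_coeff l n m = - l * B / real (Suc i)"
      unfolding n Suc gegenbauer_coeff_add_double B_def by (simp add: fact_Suc field_simps)
    have "pochhammer (l+1) (m + Suc i) = (l + 1 + real (m+i)) * pochhammer (l+1) (m+i)"
      using pochhammer_rec'[of "l+1" "m+i"] by simp
    then have raised: "gegenbauer_coeff (l+1) n m = - (l + 1 + real (m+i)) * B / real (Suc i)"
      unfolding n Suc gegenbauer_coeff_add_double B_def by (simp add: fact_Suc field_simps)
    have "n - 2 = m + 2*i" "2 \<le> n" using n Suc by auto
    then have raised2: "gegenbauer_coeff (l+1) (n-2) m = B"
      unfolding B_def by (simp add: gegenbauer_coeff_add_double)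
    have "real n = real m + 2 * real i + 2" unfolding n Suc by simp
    then show ?thesis unfolding low raised raised2 using \<open>2 \<le> n\<close> by (simp add: field_simps)
  qed
next
  case False
  moreover have "\<not> (m \<le> n - 2 \<and> even (n - 2 - m))" if "2 \<le> n"
    using False that by presburger
  ultimately show ?thesis by (simp add: gegenbauer_coeff_eq_0)
qed

lemma gegenbauer_poly_0 [simp]: "gegenbauer_poly l 0 = 1"
  by (simp add: gegenbauer_poly_def gegenbauer_coeff_def)

lemma pderiv_gegenbauer_poly_Suc:
  "pderiv (gegenbauer_poly l (Suc n)) = smult (2*l) (gegenbauer_poly (l+1) n)"
  by (rule poly_eqI) (metis coeff_pderiv coeff_gegenbauer_poly coeff_smult gegenbauer_coeff_Suc_deriv)

lemma gegenbauer_poly_lower: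
  assumes "l > 0"
  shows "poly (gegenbauer_poly l n) x = l / (real n + l)
    * (poly (gegenbauer_poly (l+1) n) x - (if 2 \<le> n then poly (gegenbauer_poly (l+1) (n-2)) x else 0))"
proof -
  have "smult (real n + l) (gegenbauer_poly l n)
      = smult l (gegenbauer_poly (l+1) n - (if 2 \<le> n then gegenbauer_poly (l+1) (n-2) else 0))"
    by (rule poly_eqI) (simp add: coeff_gegenbauer_poly gegenbauer_coeff_lower)
  from arg_cong[where f="\<lambda>p. poly p x", OF this]
  have "(real n + l) * poly (gegenbauer_poly l n) x
      = l * (poly (gegenbauer_poly (l+1) n) x - (if 2 \<le> n then poly (gegenbauer_poly (l+1) (n-2)) x else 0))"
    by (simp split: if_splits)
  moreover have "real n + l > 0" using assms by simp
  ultimately show ?thesis by (simp add: field_simps)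
qed

lemma gegenbauer_poly_ode:
  fixes l x :: real and n :: nat
  defines "Y \<equiv> gegenbauer_poly l n"
  shows "(1 - x^2) * poly (pderiv (pderiv Y)) x - (2*l+1) * x * poly (pderiv Y) x
     + real n * (real n + 2*l) * poly Y x = 0"
proof -
  have "pderiv (pderiv Y) - pCons 0 (pCons 0 (pderiv (pderiv Y))) - smult (2*l+1) (pCons 0 (pderiv Y))
      + smult (real n * (real n + 2*l)) Y = 0"
  proof (rule poly_eqI)
    fix m
    have rec: "real ((m+2)*(m+1)) * gegenbauer_coeff l n (m+2)
        = (real m * (real m + 2*l) - real n * (real n + 2*l)) * gegenbauer_coeff l n m"
      by (rule gegenbauer_coeff_ode_rec)
    show "coeff (pderiv (pderiv Y) - pCons 0 (pCons 0 (pderiv (pderiv Y)))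
        - smult (2*l+1) (pCons 0 (pderiv Y)) + smult (real n * (real n + 2*l)) Y) m = coeff 0 m"
    proof (cases m)
      case 0
      then show ?thesis
        using rec by (simp add: Y_def coeff_pderiv coeff_gegenbauer_poly algebra_simps numeral_2_eq_2)
    next
      case (Suc m')
      then show ?thesis
        using rec by (cases m') (simp_all add: Y_def coeff_pderiv coeff_gegenbauer_poly algebra_simps
            numeral_2_eq_2 numeral_3_eq_3)
    qed
  qed
  then have "poly (pderiv (pderiv Y) - pCons 0 (pCons 0 (pderiv (pderiv Y)))
      - smult (2*l+1) (pCons 0 (pderiv Y)) + smult (real n * (real n + 2*l)) Y) x = 0"
    by simp
  then show ?thesis by (simp add: algebra_simps power2_eq_square)
qed

lemma gegenbauer_poly_at_1:
  assumes "l > 0"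
  shows "poly (gegenbauer_poly l n) 1 = pochhammer (2*l) n / fact n"
  using assms
proof (induction n arbitrary: l)
  case 0
  then show ?case by simp
next
  case (Suc n)
  have raised: "poly (gegenbauer_poly (l+1) n) 1 = pochhammer (2*l+2) n / fact n"
    using Suc.IH[of "l+1"] Suc.prems by (simp add: algebra_simps)
  have deriv: "poly (pderiv (gegenbauer_poly l (Suc n))) 1 = 2*l * (pochhammer (2*l+2) n / fact n)"
    by (simp add: pderiv_gegenbauer_poly_Suc raised)
  have "- (2*l+1) * poly (pderiv (gegenbauer_poly l (Suc n))) 1
      + real (Suc n) * (real (Suc n) + 2*l) * poly (gegenbauer_poly l (Suc n)) 1 = 0"
    using gegenbauer_poly_ode[where l=l and n="Suc n" and x=1] by (simp add: algebra_simps)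
  then have "real (Suc n) * (real (Suc n) + 2*l) * poly (gegenbauer_poly l (Suc n)) 1
      = (2*l+1) * (2*l * (pochhammer (2*l+2) n / fact n))"
    unfolding deriv by linarith
  moreover have "real (Suc n) * (real (Suc n) + 2*l) \<noteq> 0"
    using Suc.prems by (simp add: add_pos_pos)
  ultimately have at_1: "poly (gegenbauer_poly l (Suc n)) 1
      = (2*l+1) * (2*l * (pochhammer (2*l+2) n / fact n)) / (real (Suc n) * (real (Suc n) + 2*l))"
    by (simp add: eq_divide_eq ac_simps)
  have "pochhammer (2*l) (Suc (Suc n)) = 2*l * ((2*l+1) * pochhammer (2*l+2) n)"
    by (simp add: pochhammer_rec algebra_simps)
  moreover have "pochhammer (2*l) (Suc (Suc n)) = (2*l + real (Suc n)) * pochhammer (2*l) (Suc n)"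
    by (rule pochhammer_rec')
  ultimately have poch: "pochhammer (2*l) (Suc n) = 2*l * ((2*l+1) * pochhammer (2*l+2) n) / (2*l + real (Suc n))"
    using Suc.prems by (simp add: field_simps add_pos_pos)
  show ?case
    unfolding at_1 poch using Suc.prems by (simp add: fact_Suc field_simps)
qed

lemma gegenbauer_poly_at_1_pos: "l > 0 \<Longrightarrow> poly (gegenbauer_poly l n) 1 > 0"
  by (simp add: gegenbauer_poly_at_1 pochhammer_pos)

lemma gegenbauer_poly_minus: "poly (gegenbauer_poly l n) (-x) = (-1)^n * poly (gegenbauer_poly l n) x"
proof -
  have "(2 * - x) ^ (n - 2*j) = (-1)^n * (2*x) ^ (n - 2*j)" if "j \<le> n div 2" for j
  proof -
    have "2*j \<le> n" using that by auto
    then obtain m where "n = m + 2*j" by (metis le_add_diff_inverse2)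
    then show ?thesis by (simp add: power_add power_mult power_minus[of "2*x"])
  qed
  then show ?thesis
    unfolding poly_gegenbauer_poly gegenbauer_def sum_distrib_left by (auto intro: sum.cong)
qed

text \<open>Sonine's argument: by the differential equation the energy Y^2 + (1 - t^2) Y'^2 / (n (n + 2l))
  is nondecreasing on [0, 1], and at t = 1 it equals Y(1)^2.\<close>

lemma abs_gegenbauer_poly_le_at_1_nonneg:
  assumes l: "l > 0" and x: "0 \<le> x" "x \<le> 1"
  shows "\<bar>poly (gegenbauer_poly l n) x\<bar> \<le> poly (gegenbauer_poly l n) 1"
proof (cases "n = 0")
  case False
  define L where "L = real n * (real n + 2*l)"
  have L: "L > 0" unfolding L_def using l False by (simp add: add_pos_pos)
  define Y where "Y = gegenbauer_poly l n"
  define E where "E = (\<lambda>t. (poly Y t)^2 + (1 - t^2) * (poly (pderiv Y) t)^2 / L)"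
  have E_deriv: "DERIV E t :> 4 * l * t * (poly (pderiv Y) t)^2 / L" for t
  proof -
    have ode: "(1 - t^2) * poly (pderiv (pderiv Y)) t = (2*l+1) * t * poly (pderiv Y) t - L * poly Y t"
      using gegenbauer_poly_ode[where l=l and n=n and x=t] unfolding Y_def L_def by (simp add: algebra_simps)
    have "(1 - t^2) * (2 * poly (pderiv Y) t * poly (pderiv (pderiv Y)) t)
        = 2 * poly (pderiv Y) t * ((2*l+1) * t * poly (pderiv Y) t - L * poly Y t)"
      by (simp flip: ode)
    then have simplified: "2 * poly Y t * poly (pderiv Y) t + ((- 2 * t) * (poly (pderiv Y) t)^2
        + (1 - t^2) * (2 * poly (pderiv Y) t * poly (pderiv (pderiv Y)) t)) / L
        = 4 * l * t * (poly (pderiv Y) t)^2 / L"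
      using L by (simp add: field_simps power2_eq_square)
    have "DERIV E t :> 2 * poly Y t * poly (pderiv Y) t + ((- 2 * t) * (poly (pderiv Y) t)^2
        + (1 - t^2) * (2 * poly (pderiv Y) t * poly (pderiv (pderiv Y)) t)) / L"
      unfolding E_def using L by (auto intro!: derivative_eq_intros simp: field_simps power2_eq_square)
    then show ?thesis unfolding simplified .
  qed
  have "E x \<le> E 1"
  proof (rule DERIV_nonneg_imp_increasing_open[OF x(2)])
    fix t assume "x < t" "t < 1"
    then have "0 \<le> 4 * l * t * (poly (pderiv Y) t)^2 / L" using x l L by simp
    then show "\<exists>y. DERIV E t :> y \<and> 0 \<le> y" using E_deriv by blast
  qed (use L in \<open>auto simp: E_def intro!: continuous_intros\<close>)
  moreover have "(poly Y x)^2 \<le> E x" unfolding E_def using x L by (simp add: power_le_one)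
  ultimately have "(poly Y x)^2 \<le> (poly Y 1)^2" by (simp add: E_def)
  then show ?thesis using gegenbauer_poly_at_1_pos[OF l, of n] abs_le_square_iff unfolding Y_def by force
qed simp

lemma abs_gegenbauer_poly_le_at_1:
  assumes "l > 0" and "\<bar>x\<bar> \<le> 1"
  shows "\<bar>poly (gegenbauer_poly l n) x\<bar> \<le> poly (gegenbauer_poly l n) 1"
  using abs_gegenbauer_poly_le_at_1_nonneg[OF assms(1), of "\<bar>x\<bar>" n] assms(2)
    gegenbauer_poly_minus[of l n x]
  by (cases "x \<ge> 0") (simp_all add: abs_mult)

lemma gegenbauer_poly_wronskian_deriv:
  fixes k m n :: nat and t :: real
  defines "Ym \<equiv> gegenbauer_poly (real k + 1/2) m" and "Yn \<equiv> gegenbauer_poly (real k + 1/2) n"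
  shows "DERIV (\<lambda>t. (1 - t^2)^(k+1) * (poly (pderiv Ym) t * poly Yn t - poly (pderiv Yn) t * poly Ym t)) t
    :> (real n * (real n + 2*k + 1) - real m * (real m + 2*k + 1)) * ((1 - t^2)^k * poly Ym t * poly Yn t)"
proof -
  have ode_m: "(1 - t^2) * poly (pderiv (pderiv Ym)) t
      = 2 * real (k+1) * t * poly (pderiv Ym) t - real m * (real m + 2*k + 1) * poly Ym t"
    using gegenbauer_poly_ode[where l="real k + 1/2" and n=m and x=t] unfolding Ym_def
    by (simp add: algebra_simps)
  have ode_n: "(1 - t^2) * poly (pderiv (pderiv Yn)) t
      = 2 * real (k+1) * t * poly (pderiv Yn) t - real n * (real n + 2*k + 1) * poly Yn t"
    using gegenbauer_poly_ode[where l="real k + 1/2" and n=n and x=t] unfolding Yn_def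
    by (simp add: algebra_simps)
  have "DERIV (\<lambda>t. 1 - t^2) t :> - 2 * t"
    by (auto intro!: derivative_eq_intros)
  from DERIV_power[OF this, of "k+1"]
  have "DERIV (\<lambda>t. (1 - t^2)^(k+1)) t :> real (k+1) * (1 - t^2)^k * (- 2 * t)"
    by (simp add: mult_ac)
  moreover have "DERIV (\<lambda>t. poly (pderiv Ym) t * poly Yn t - poly (pderiv Yn) t * poly Ym t) t
    :> poly (pderiv (pderiv Ym)) t * poly Yn t - poly (pderiv (pderiv Yn)) t * poly Ym t"
    by (auto intro!: derivative_eq_intros simp: algebra_simps)
  ultimately have "DERIV (\<lambda>t. (1 - t^2)^(k+1) * (poly (pderiv Ym) t * poly Yn t - poly (pderiv Yn) t * poly Ym t)) t
    :> real (k+1) * (1 - t^2)^k * (- 2 * t) * (poly (pderiv Ym) t * poly Yn t - poly (pderiv Yn) t * poly Ym t)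
       + (1 - t^2)^k * (((1 - t^2) * poly (pderiv (pderiv Ym)) t) * poly Yn t
                        - ((1 - t^2) * poly (pderiv (pderiv Yn)) t) * poly Ym t)"
    by (rule DERIV_mult[THEN DERIV_cong]) (simp add: algebra_simps)
  then show ?thesis unfolding ode_m ode_n by (simp add: algebra_simps)
qed

lemma gegenbauer_poly_orthogonal:
  assumes "m \<noteq> n"
  shows "((\<lambda>x. (1 - x^2)^k * poly (gegenbauer_poly (real k + 1/2) m) x * poly (gegenbauer_poly (real k + 1/2) n) x)
           has_integral 0) {-1..1}"
proof -
  define Ym where "Ym = gegenbauer_poly (real k + 1/2) m"
  define Yn where "Yn = gegenbauer_poly (real k + 1/2) n"
  define c where "c = real n * (real n + 2*k + 1) - real m * (real m + 2*k + 1)"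
  have "c = (real n - real m) * (real n + real m + 2*k + 1)" unfolding c_def by (simp add: algebra_simps)
  then have "c \<noteq> 0" using assms by simp
  have "((\<lambda>t. c * ((1 - t^2)^k * poly Ym t * poly Yn t)) has_integral
      (1 - 1^2)^(k+1) * (poly (pderiv Ym) 1 * poly Yn 1 - poly (pderiv Yn) 1 * poly Ym 1)
      - (1 - (-1)^2)^(k+1) * (poly (pderiv Ym) (-1) * poly Yn (-1) - poly (pderiv Yn) (-1) * poly Ym (-1))) {-1..1}"
  proof (rule fundamental_theorem_of_calculus)
    fix x :: real
    have "DERIV (\<lambda>t. (1 - t^2)^(k+1) * (poly (pderiv Ym) t * poly Yn t - poly (pderiv Yn) t * poly Ym t)) x
        :> c * ((1 - x^2)^k * poly Ym x * poly Yn x)"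
      unfolding c_def Ym_def Yn_def by (rule gegenbauer_poly_wronskian_deriv)
    then show "((\<lambda>t. (1 - t^2)^(k+1) * (poly (pderiv Ym) t * poly Yn t - poly (pderiv Yn) t * poly Ym t))
        has_vector_derivative c * ((1 - x^2)^k * poly Ym x * poly Yn x)) (at x within {-1..1})"
      by (simp add: has_field_derivative_at_within flip: has_real_derivative_iff_has_vector_derivative)
  qed simp
  then have "((\<lambda>t. c * ((1 - t^2)^k * poly Ym t * poly Yn t)) has_integral 0) {-1..1}"
    by simp
  from has_integral_mult_right[OF this, of "inverse c"] \<open>c \<noteq> 0\<close>
  show ?thesis unfolding Ym_def Yn_def by (simp add: field_simps)
qed

lemma gegenbauer_poly_norm_nonzero:
  assumes "l > 0"
  shows "integral {-1..1} (\<lambda>x. (1 - x^2)^k * (poly (gegenbauer_poly l n) x)^2) \<noteq> 0"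
proof
  define f where "f = (\<lambda>x::real. (1 - x^2)^k * (poly (gegenbauer_poly l n) x)^2)"
  assume "integral {-1..1} (\<lambda>x. (1 - x^2)^k * (poly (gegenbauer_poly l n) x)^2) = 0"
  moreover have cont: "continuous_on {-1..1} f" unfolding f_def by (intro continuous_intros)
  ultimately have "(f has_integral 0) (cbox (-1) 1)"
    using integrable_continuous_real[OF cont] by (simp add: f_def has_integral_integral)
  moreover have nonneg: "0 \<le> f x" if "x \<in> box (-1) 1" for x
  proof -
    have "0 \<le> 1 - x^2" using that by (auto simp: box_real abs_square_le_1)
    then show ?thesis by (simp add: f_def)
  qed
  ultimately have f_0: "f x = 0" if "x \<in> {-1<..<1}" for x
    using has_integral_0_cbox_imp_0[of "-1" 1 f x] that cont by (auto simp: box_real)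
  have weight_nonzero: "(1 - x^2)^k \<noteq> 0" if "x \<in> {-1<..<1}" for x :: real
  proof -
    have "x^2 < 1" using that by (auto simp: abs_square_less_1)
    then show ?thesis by simp
  qed
  have "{-1<..<1} \<subseteq> {x. poly (gegenbauer_poly l n) x = 0}"
  proof
    fix x :: real assume "x \<in> {-1<..<1}"
    with f_0 weight_nonzero show "x \<in> {x. poly (gegenbauer_poly l n) x = 0}"
      unfolding f_def by (metis mem_Collect_eq mult_eq_0_iff zero_eq_power2)
  qed
  moreover have "gegenbauer_poly l n \<noteq> 0" using gegenbauer_poly_at_1_pos[OF assms, of n] by auto
  then have "finite {x. poly (gegenbauer_poly l n) x = 0}" by (rule poly_roots_finite)
  ultimately have "finite {-1<..<(1::real)}" by (rule finite_subset)
  then show False using infinite_Ioo[of "-1" "1::real"] by simp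
qed

section \<open>Connection coefficients\<close>

definition gegenbauer_connection_coeff :: "real \<Rightarrow> nat \<Rightarrow> nat \<Rightarrow> nat \<Rightarrow> real" where
  "gegenbauer_connection_coeff l k n i =
     (-1)^i * real (k choose i) * pochhammer l k * (real n + real k - 2 * real i + l)
       / pochhammer (real n - real i + l) (k+1)"

lemma gegenbauer_connection_coeff_0_0:
  "l > 0 \<Longrightarrow> gegenbauer_connection_coeff l 0 n 0 = 1"
  by (simp add: gegenbauer_connection_coeff_def add_pos_pos)

lemma gegenbauer_connection_coeff_beyond: "gegenbauer_connection_coeff l k n (Suc k) = 0"
  by (simp add: gegenbauer_connection_coeff_def)

lemma gegenbauer_connection_coeff_Suc_0:
  assumes "l > 0"
  shows "gegenbauer_connection_coeff l (Suc k) n 0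
    = gegenbauer_connection_coeff l k n 0 * ((l + real k) / (real n + real k + l))"
proof -
  define h where "h = real n + l"
  define Q where "Q = pochhammer h (k+1)"
  define A where "A = real n + real k + l"
  define A1 where "A1 = A + 1"
  have "h > 0" "A > 0" "A1 > 0" using assms by (simp_all add: h_def A1_def A_def add_pos_pos)
  then have "Q > 0" by (simp add: Q_def pochhammer_pos)
  have Q_Suc: "pochhammer h (Suc k + 1) = Q * A1"
    using pochhammer_rec'[of h "k+1"] by (simp add: Q_def h_def A1_def A_def algebra_simps)
  have poch_Suc: "pochhammer l (Suc k) = pochhammer l k * (l + real k)"
    using pochhammer_rec'[of l k] by (simp add: algebra_simps)
  have args: "real n - real (0::nat) + l = h" "real n + real (Suc k) - 2 * real (0::nat) + l = A1"
    "real n + real k - 2 * real (0::nat) + l = A"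
    by (simp_all add: h_def A1_def A_def)
  show ?thesis
    unfolding gegenbauer_connection_coeff_def args Q_Suc poch_Suc Q_def[symmetric] A_def[symmetric]
    using \<open>Q > 0\<close> \<open>A > 0\<close> \<open>A1 > 0\<close> by (simp add: field_simps)
qed

lemma gegenbauer_connection_coeff_Suc_Suc:
  assumes l: "l > 0" and n: "2 * Suc j \<le> n"
  shows "gegenbauer_connection_coeff l (Suc k) n (Suc j)
    = gegenbauer_connection_coeff l k n (Suc j) * ((l + real k) / (real (n - 2 * Suc j) + real k + l))
      - gegenbauer_connection_coeff l k n j * ((l + real k) / (real (n - 2*j) + real k + l))"
proof -
  define h where "h = real n - real (Suc j) + l"
  define Q where "Q = pochhammer h (k+1)"
  define E where "E = h + real k + 1"
  define A where "A = real (n - 2 * Suc j) + real k + l"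
  define B where "B = A + 2"
  define pk where "pk = pochhammer l k"
  define c0 where "c0 = real (k choose j)"
  define c1 where "c1 = real (k choose Suc j)"
  have "h > 0" unfolding h_def using n l by simp
  then have "Q > 0" "E > 0" by (simp_all add: Q_def E_def pochhammer_pos)
  have "A > 0" "B > 0" using l by (simp_all add: A_def B_def add_pos_pos)
  have Q_Suc: "pochhammer h (Suc k + 1) = Q * E"
    unfolding Q_def E_def using pochhammer_rec'[of h "k+1"] by (simp add: algebra_simps)
  have Q_shift: "pochhammer (h + 1) (k + 1) = Q * E / h"
    using pochhammer_rec[of h "k+1"] Q_Suc \<open>h > 0\<close> by (simp add: field_simps)
  have poch_Suc: "pochhammer l (Suc k) = pk * (l + real k)"
    unfolding pk_def using pochhammer_rec'[of l k] by (simp add: algebra_simps)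
  have args: "real n - real j + l = h + 1" "real n - real (Suc j) + l = h"
    "real n + real k - 2 * real (Suc j) + l = A" "real n + real k - 2 * real j + l = B"
    "real (n - 2*j) + real k + l = B" "real n + real (Suc k) - 2 * real (Suc j) + l = E - real j - 1"
    using n by (simp_all add: h_def A_def B_def E_def of_nat_diff)
  have choose_Suc: "real (Suc k choose Suc j) = c0 + c1" unfolding c0_def c1_def by simp
  have choose_rel: "real (Suc j) * c1 = (real k - real j) * c0"
  proof (cases "j \<le> k")
    case True
    have "Suc j * (k choose Suc j) = (k - j) * (k choose j)"
      using binomial_absorption[of j k] binomial_absorb_comp[of k j] by simp
    then have "real (Suc j * (k choose Suc j)) = real ((k - j) * (k choose j))" by simp
    then show ?thesis using True unfolding c0_def c1_def by (simp only: of_nat_mult of_nat_diff)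
  qed (simp add: c0_def c1_def binomial_eq_0)
  have high: "gegenbauer_connection_coeff l k n (Suc j) * ((l + real k) / A)
      = (-1)^(Suc j) * c1 * pk * (l + real k) / Q"
    unfolding gegenbauer_connection_coeff_def args(2,3) Q_def[symmetric] pk_def[symmetric] c1_def[symmetric]
    using \<open>A > 0\<close> \<open>Q > 0\<close> by (simp add: field_simps)
  have low: "gegenbauer_connection_coeff l k n j * ((l + real k) / B)
      = (-1)^j * c0 * pk * (l + real k) * h / (Q * E)"
    unfolding gegenbauer_connection_coeff_def args(1,4) Q_shift pk_def[symmetric] c0_def[symmetric]
    using \<open>B > 0\<close> \<open>Q > 0\<close> \<open>h > 0\<close> \<open>E > 0\<close> by (simp add: field_simps)
  have raised: "gegenbauer_connection_coeff l (Suc k) n (Suc j)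
      = (-1)^(Suc j) * (c0 + c1) * pk * (l + real k) * (E - real j - 1) / (Q * E)"
    unfolding gegenbauer_connection_coeff_def args(2,6) Q_Suc poch_Suc choose_Suc by simp
  have "(-1)^(Suc j) * c1 * pk * (l + real k) / Q - (-1)^j * c0 * pk * (l + real k) * h / (Q * E)
      = (-1)^(Suc j) * pk * (l + real k) * (c1 * E + c0 * h) / (Q * E)"
    using \<open>Q > 0\<close> \<open>E > 0\<close> by (simp add: field_simps)
  also have "c1 * E + c0 * h = (c0 + c1) * (E - real j - 1)"
    using choose_rel unfolding E_def by (simp add: algebra_simps)
  finally show ?thesis unfolding A_def[symmetric] args(5) high low raised by (simp add: mult_ac)
qed

lemma gegenbauer_poly_connection:
  assumes l: "l > 0"
  shows "poly (gegenbauer_poly l n) x = (\<Sum>i\<le>k. if 2*i \<le> n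
    then gegenbauer_connection_coeff l k n i * poly (gegenbauer_poly (l + real k) (n - 2*i)) x else 0)"
proof (induction k)
  case 0
  then show ?case using l by (simp add: gegenbauer_connection_coeff_0_0)
next
  case (Suc k)
  define l' where "l' = l + real k"
  have "l' > 0" using l by (simp add: l'_def add_pos_pos)
  define a where "a = (\<lambda>m::nat. l' / (real m + l'))"
  define C where "C = (\<lambda>m. poly (gegenbauer_poly (l'+1) m) x)"
  define V where "V = gegenbauer_connection_coeff l"
  \<comment> \<open>Lower each C(l', n - 2i) once; the two resulting sums telescope.\<close>
  define f where "f = (\<lambda>i. if 2*i \<le> n then V k n i * a (n - 2*i) * C (n - 2*i) else 0)"
  define g where "g = (\<lambda>i. if 2 * Suc i \<le> n then V k n i * a (n - 2*i) * C (n - 2 * Suc i) else 0)"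
  have "poly (gegenbauer_poly l n) x = (\<Sum>i\<le>k. f i - g i)"
    unfolding Suc.IH l'_def[symmetric] V_def[symmetric]
  proof (rule sum.cong)
    fix i
    have "(2 \<le> n - 2*i) = (2 * Suc i \<le> n)" "n - 2*i - 2 = n - 2 * Suc i" by auto
    then have lower: "poly (gegenbauer_poly l' (n - 2*i)) x
        = a (n - 2*i) * (C (n - 2*i) - (if 2 * Suc i \<le> n then C (n - 2 * Suc i) else 0))"
      using gegenbauer_poly_lower[OF \<open>l' > 0\<close>, of "n - 2*i" x] unfolding a_def C_def by simp
    show "(if 2*i \<le> n then V k n i * poly (gegenbauer_poly l' (n - 2*i)) x else 0) = f i - g i"
      unfolding f_def g_def lower by (simp add: algebra_simps)
  qed simp
  also have "\<dots> = (\<Sum>i\<le>Suc k. f i) - (\<Sum>i\<le>k. g i)"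
    by (simp add: sum_subtractf f_def V_def gegenbauer_connection_coeff_beyond)
  also have "\<dots> = f 0 + (\<Sum>i\<le>k. f (Suc i) - g i)"
    by (simp only: sum.atMost_Suc_shift[of f k] sum_subtractf)
  also have "\<dots> = (\<Sum>i\<le>Suc k. if 2*i \<le> n
      then V (Suc k) n i * poly (gegenbauer_poly (l + real (Suc k)) (n - 2*i)) x else 0)"
    unfolding sum.atMost_Suc_shift
  proof (intro arg_cong2[where f="(+)"] sum.cong refl)
    show "f 0 = (if 2*0 \<le> n then V (Suc k) n 0 * poly (gegenbauer_poly (l + real (Suc k)) (n - 2*0)) x else 0)"
      unfolding f_def a_def C_def V_def l'_def
      by (simp add: gegenbauer_connection_coeff_Suc_0[OF l] add_ac)
  next
    fix i
    show "f (Suc i) - g i = (if 2 * Suc i \<le> n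
        then V (Suc k) n (Suc i) * poly (gegenbauer_poly (l + real (Suc k)) (n - 2 * Suc i)) x else 0)"
      unfolding f_def g_def a_def C_def V_def l'_def
      by (simp add: gegenbauer_connection_coeff_Suc_Suc[OF l] algebra_simps add_ac del: mult_Suc_right)
  qed
  finally show ?case unfolding V_def .
qed

section \<open>Normalized Gegenbauer polynomials\<close>

lemma norm_gegenbauer_eq_poly:
  "norm_gegenbauer d n x
     = poly (gegenbauer_poly ((real d - 1) / 2) n) x / poly (gegenbauer_poly ((real d - 1) / 2) n) 1"
  by (simp add: norm_gegenbauer_def poly_gegenbauer_poly)

lemma continuous_on_norm_gegenbauer: "d \<ge> 2 \<Longrightarrow> continuous_on A (norm_gegenbauer d n)"
  unfolding norm_gegenbauer_eq_poly[abs_def]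
  by (intro continuous_intros) (use gegenbauer_poly_at_1_pos[of "(real d - 1) / 2" n] in simp)

lemma abs_norm_gegenbauer_le_1:
  assumes "d \<ge> 2" and "\<bar>x\<bar> \<le> 1"
  shows "\<bar>norm_gegenbauer d n x\<bar> \<le> 1"
proof -
  have "(real d - 1) / 2 > 0" using assms(1) by simp
  from abs_gegenbauer_poly_le_at_1[OF this assms(2), of n] gegenbauer_poly_at_1_pos[OF this, of n]
  show ?thesis unfolding norm_gegenbauer_eq_poly by (simp add: abs_div divide_le_eq_1)
qed

lemma norm_gegenbauer_2: "norm_gegenbauer 2 n x = poly (gegenbauer_poly (1/2) n) x"
  using gegenbauer_poly_at_1[of "1/2" n] by (simp add: norm_gegenbauer_eq_poly pochhammer_fact[symmetric])

lemma odd_dfact_div_power: "odd_dfact k / 2^k = pochhammer (1/2) k"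
proof (induction k)
  case 0
  then show ?case by (simp add: odd_dfact_def)
next
  case (Suc k)
  have "odd_dfact (Suc k) = odd_dfact k * (2 * real (Suc k) - 1)"
    by (simp add: odd_dfact_def prod.nat_ivl_Suc')
  then have "odd_dfact (Suc k) / 2^Suc k = (odd_dfact k / 2^k) * (1/2 + real k)"
    by (simp add: field_simps)
  then show ?case using Suc.IH by (simp add: pochhammer_rec' add_ac)
qed

lemma gegenbauer_poly_half_integer_at_1:
  "poly (gegenbauer_poly (real k + 1/2) m) 1 = real ((2*k + m) choose m)"
proof -
  have "poly (gegenbauer_poly (real k + 1/2) m) 1 = pochhammer (real (2*k + m) - real m + 1) m / fact m"
    by (simp add: gegenbauer_poly_at_1 algebra_simps)
  also have "\<dots> = real (2*k + m) gchoose m" by (simp only: gbinomial_pochhammer')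
  finally show ?thesis by (simp add: binomial_gbinomial)
qed

lemma u_coeff_eq_connection_coeff:
  assumes "i \<le> k"
  shows "u_coeff i m k = gegenbauer_connection_coeff (1/2) k (m + 2*i) i * real ((2*k + m) choose m)"
proof -
  define P1 where "P1 = pochhammer (real m + real i + 1/2) (k - i)"
  define P2 where "P2 = pochhammer (real m + real k + 3/2) i"
  define M where "M = real m + real k + 1/2"
  have "P1 > 0" "P2 > 0" "M > 0" by (simp_all add: P1_def P2_def M_def pochhammer_pos add_pos_pos)
  have "pochhammer (real m + real i + 1/2) (k+1) = P1 * pochhammer (real m + real i + 1/2 + real (k - i)) (Suc i)"
    unfolding P1_def using pochhammer_product'[of "real m + real i + 1/2" "k - i" "Suc i"] assms by simp
  also have "\<dots> = P1 * (M * P2)"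
    using assms by (simp add: pochhammer_rec P2_def M_def of_nat_diff algebra_simps)
  finally have poch: "pochhammer (real m + real i + 1/2) (k+1) = P1 * (M * P2)" .
  have args: "real (m + 2*i) - real i + 1/2 = real m + real i + 1/2"
    "real (m + 2*i) + real k - 2 * real i + 1/2 = M"
    by (simp_all add: M_def)
  show ?thesis
    unfolding u_coeff_def gegenbauer_connection_coeff_def args poch odd_dfact_div_power[symmetric]
      P1_def[symmetric] P2_def[symmetric]
    using \<open>P1 > 0\<close> \<open>P2 > 0\<close> \<open>M > 0\<close> by (simp add: field_simps)
qed

lemma norm_gegenbauer_half_integer:
  "norm_gegenbauer (2*k+2) m x = poly (gegenbauer_poly (real k + 1/2) m) x / real ((2*k + m) choose m)"
proof -
  have "(real (2*k+2) - 1) / 2 = real k + 1/2" by simp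
  then show ?thesis by (simp only: norm_gegenbauer_eq_poly gegenbauer_poly_half_integer_at_1)
qed

lemma legendre_connection:
  "norm_gegenbauer 2 n x = (\<Sum>i\<le>k. if 2*i \<le> n
     then u_coeff i (n - 2*i) k * norm_gegenbauer (2*k+2) (n - 2*i) x else 0)"
  unfolding norm_gegenbauer_2 gegenbauer_poly_connection[of "1/2" n x k, simplified]
proof (rule sum.cong)
  fix i assume "i \<in> {..k}"
  then have "i \<le> k" by simp
  show "(if 2*i \<le> n then gegenbauer_connection_coeff (1/2) k n i
        * poly (gegenbauer_poly (1/2 + real k) (n - 2*i)) x else 0)
      = (if 2*i \<le> n then u_coeff i (n - 2*i) k * norm_gegenbauer (2*k+2) (n - 2*i) x else 0)"
  proof (cases "2*i \<le> n")
    case True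
    then obtain m where n: "n = m + 2*i" by (metis le_add_diff_inverse2)
    have "real ((2*k + m) choose m) > 0" by simp
    then have "u_coeff i m k * norm_gegenbauer (2*k+2) m x
        = gegenbauer_connection_coeff (1/2) k n i * poly (gegenbauer_poly (1/2 + real k) m) x"
      unfolding u_coeff_eq_connection_coeff[OF \<open>i \<le> k\<close>] norm_gegenbauer_half_integer n
      by (simp add: add.commute)
    then show ?thesis by (simp add: n)
  qed simp
qed simp

section \<open>Integrating Schoenberg expansions\<close>

lemma sums_integral_Weierstrass:
  fixes f :: "nat \<Rightarrow> real \<Rightarrow> real"
  assumes cont: "\<And>n. continuous_on {a..b} (f n)"
    and bound: "\<And>n x. x \<in> {a..b} \<Longrightarrow> \<bar>f n x\<bar> \<le> M n" and "summable M"
    and sums: "\<And>x. x \<in> {a..b} \<Longrightarrow> (\<lambda>n. f n x) sums F x"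
  shows "(\<lambda>n. integral {a..b} (f n)) sums integral {a..b} F"
proof -
  have "uniform_limit {a..b} (\<lambda>N x. \<Sum>n<N. f n x) (\<lambda>x. \<Sum>n. f n x) sequentially"
    using bound \<open>summable M\<close> by (intro Weierstrass_m_test) auto
  then obtain I J where I: "\<And>N. ((\<lambda>x. \<Sum>n<N. f n x) has_integral I N) {a..b}"
    and J: "((\<lambda>x. \<Sum>n. f n x) has_integral J) {a..b}" and "I \<longlonglongrightarrow> J"
    by (rule uniform_limit_integral) (auto intro!: continuous_intros cont)
  have "I = (\<lambda>N. \<Sum>n<N. integral {a..b} (f n))"
  proof
    fix N
    show "I N = (\<Sum>n<N. integral {a..b} (f n))"
      unfolding integral_unique[OF I[of N], symmetric]
      by (rule integral_sum) (auto intro: integrable_continuous_interval cont)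
  qed
  moreover have "J = integral {a..b} F"
    using integral_unique[OF J] sums by (metis (no_types, lifting) integral_cong sums_unique)
  ultimately show ?thesis using \<open>I \<longlonglongrightarrow> J\<close> by (simp add: sums_def)
qed

lemma schoenberg_coeffs_sums_arccos:
  assumes "schoenberg_coeffs d \<psi> b" and "\<bar>x\<bar> \<le> 1"
  shows "(\<lambda>n. b n * norm_gegenbauer d n x) sums \<psi> (arccos x)"
proof -
  have "arccos x \<in> {0..pi}" using assms(2) by (auto simp: arccos_bounded)
  then show ?thesis using assms unfolding schoenberg_coeffs_def by (metis cos_arccos_abs)
qed

lemma schoenberg_coeffs_integral_sums:
  assumes "d \<ge> 2" and b: "schoenberg_coeffs d \<psi> b" and "continuous_on {0..pi} \<psi>"
    and g: "continuous_on {-1..1} g"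
  shows "(\<lambda>n. b n * integral {-1..1} (\<lambda>x. norm_gegenbauer d n x * g x))
    sums integral {-1..1} (\<lambda>x. \<psi> (arccos x) * g x)"
proof -
  have "bounded (g ` {-1..1})"
    using compact_imp_bounded[OF compact_continuous_image[OF g compact_Icc]] .
  then obtain G where "\<forall>y\<in>g ` {-1..1}. norm y \<le> G" by (auto simp: bounded_iff)
  then have G: "\<And>x. x \<in> {-1..1} \<Longrightarrow> \<bar>g x\<bar> \<le> G" by auto
  have "b n \<ge> 0" "summable b" for n using b by (auto simp: schoenberg_coeffs_def sums_iff)
  have "(\<lambda>n. integral {-1..1} (\<lambda>x. b n * norm_gegenbauer d n x * g x))
      sums integral {-1..1} (\<lambda>x. \<psi> (arccos x) * g x)"
  proof (rule sums_integral_Weierstrass)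
    show "continuous_on {-1..1} (\<lambda>x. b n * norm_gegenbauer d n x * g x)" for n
      by (intro continuous_intros continuous_on_norm_gegenbauer \<open>d \<ge> 2\<close> g)
    show "\<bar>b n * norm_gegenbauer d n x * g x\<bar> \<le> b n * G" if "x \<in> {-1..1}" for n x
    proof -
      have "\<bar>norm_gegenbauer d n x\<bar> \<le> 1" using abs_norm_gegenbauer_le_1[OF \<open>d \<ge> 2\<close>] that by auto
      then have "\<bar>norm_gegenbauer d n x\<bar> * \<bar>g x\<bar> \<le> 1 * G" using G[OF that] by (intro mult_mono) auto
      then show ?thesis using \<open>b n \<ge> 0\<close> by (simp add: abs_mult mult.assoc mult_left_mono)
    qed
    show "summable (\<lambda>n. b n * G)" using \<open>summable b\<close> by (rule summable_mult2)
    show "(\<lambda>n. b n * norm_gegenbauer d n x * g x) sums (\<psi> (arccos x) * g x)" if "x \<in> {-1..1}" for x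
      using schoenberg_coeffs_sums_arccos[OF b, of x] that by (auto intro: sums_mult2)
  qed
  then show ?thesis by (simp add: mult.assoc)
qed

definition gegenbauer_sqnorm :: "nat \<Rightarrow> nat \<Rightarrow> real" where
  "gegenbauer_sqnorm k m = integral {-1..1} (\<lambda>x. (1 - x^2)^k * (norm_gegenbauer (2*k+2) m x)^2)"

lemma gegenbauer_sqnorm_nonzero: "gegenbauer_sqnorm k m \<noteq> 0"
proof -
  define c where "c = real ((2*k + m) choose m)"
  have "c > 0" by (simp add: c_def)
  have "gegenbauer_sqnorm k m
      = integral {-1..1} (\<lambda>x. (1 - x^2)^k * (poly (gegenbauer_poly (real k + 1/2) m) x)^2) / c^2"
    unfolding gegenbauer_sqnorm_def norm_gegenbauer_half_integer c_def[symmetric]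
    by (simp add: power_divide flip: integral_divide)
  then show ?thesis using gegenbauer_poly_norm_nonzero[of "real k + 1/2" k m] \<open>c > 0\<close> by simp
qed

lemma integral_norm_gegenbauer_orthogonal:
  "integral {-1..1} (\<lambda>x. norm_gegenbauer (2*k+2) n x * ((1 - x^2)^k * norm_gegenbauer (2*k+2) m x))
    = (if n = m then gegenbauer_sqnorm k m else 0)"
proof (cases "n = m")
  case True
  then show ?thesis by (simp add: gegenbauer_sqnorm_def power2_eq_square mult_ac)
next
  case False
  have "integral {-1..1} (\<lambda>x. norm_gegenbauer (2*k+2) n x * ((1 - x^2)^k * norm_gegenbauer (2*k+2) m x))
      = integral {-1..1} (\<lambda>x. (1 - x^2)^k * poly (gegenbauer_poly (real k + 1/2) n) x
          * poly (gegenbauer_poly (real k + 1/2) m) x) / (real ((2*k + n) choose n) * real ((2*k + m) choose m))"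
    unfolding norm_gegenbauer_half_integer by (simp add: mult_ac)
  then show ?thesis using False gegenbauer_poly_orthogonal[OF False, of k] by (simp add: integral_unique)
qed

lemma integral_legendre_norm_gegenbauer:
  "integral {-1..1} (\<lambda>x. norm_gegenbauer 2 n x * ((1 - x^2)^k * norm_gegenbauer (2*k+2) m x))
    = (\<Sum>i\<le>k. if n = m + 2*i then u_coeff i m k * gegenbauer_sqnorm k m else 0)"
proof -
  define g where "g = (\<lambda>x::real. (1 - x^2)^k * norm_gegenbauer (2*k+2) m x)"
  define T where "T = (\<lambda>i x. if 2*i \<le> n then u_coeff i (n - 2*i) k * norm_gegenbauer (2*k+2) (n - 2*i) x * g x
    else 0)"
  have "integral {-1..1} (\<lambda>x. norm_gegenbauer 2 n x * g x) = integral {-1..1} (\<lambda>x. \<Sum>i\<le>k. T i x)"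
    unfolding legendre_connection[of n _ k] T_def by (auto simp: sum_distrib_right intro!: integral_cong sum.cong)
  also have "\<dots> = (\<Sum>i\<le>k. integral {-1..1} (T i))"
  proof (rule integral_sum)
    show "T i integrable_on {-1..1}" for i
      unfolding T_def g_def
      by (cases "2*i \<le> n") (auto intro!: integrable_continuous_interval continuous_intros continuous_on_norm_gegenbauer)
  qed simp
  also have "\<dots> = (\<Sum>i\<le>k. if n = m + 2*i then u_coeff i m k * gegenbauer_sqnorm k m else 0)"
  proof (rule sum.cong)
    fix i
    show "integral {-1..1} (T i) = (if n = m + 2*i then u_coeff i m k * gegenbauer_sqnorm k m else 0)"
    proof (cases "2*i \<le> n")
      case True
      then have "integral {-1..1} (T i) = u_coeff i (n - 2*i) k
          * integral {-1..1} (\<lambda>x. norm_gegenbauer (2*k+2) (n - 2*i) x * ((1 - x^2)^k * norm_gegenbauer (2*k+2) m x))"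
        by (simp add: T_def g_def mult.assoc)
      also have "\<dots> = u_coeff i (n - 2*i) k * (if n - 2*i = m then gegenbauer_sqnorm k m else 0)"
        unfolding integral_norm_gegenbauer_orthogonal ..
      finally show ?thesis using True by auto
    qed (auto simp: T_def)
  qed simp
  finally show ?thesis unfolding g_def .
qed

lemma sums_mult_sum_if_eq:
  fixes a :: "nat \<Rightarrow> real"
  assumes "finite I"
  shows "(\<lambda>j. a j * (\<Sum>i\<in>I. if j = h i then c i else 0)) sums (\<Sum>i\<in>I. a (h i) * c i)"
proof -
  have "(\<lambda>j. a j * (\<Sum>i\<in>I. if j = h i then c i else 0)) = (\<lambda>j. \<Sum>i\<in>I. if j = h i then a (h i) * c i else 0)"
    by (auto simp: sum_distrib_left intro!: sum.cong)
  then show ?thesis using sums_sum[OF sums_single] by simp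
qed

theorem theorem2:
  fixes k :: nat and \<psi> :: "real \<Rightarrow> real" and b2 bd :: "nat \<Rightarrow> real"
  assumes "k \<ge> 1"
    and "\<psi> \<in> Psi (2*k+2)"
    and "schoenberg_coeffs 2 \<psi> b2"
    and "schoenberg_coeffs (2*k+2) \<psi> bd"
  shows "\<forall>n. bd n = (\<Sum>i\<le>k. u_coeff i n k * b2 (n + 2*i))"
proof
  fix n
  define g where "g = (\<lambda>x::real. (1 - x^2)^k * norm_gegenbauer (2*k+2) n x)"
  define N where "N = gegenbauer_sqnorm k n"
  have \<psi>: "continuous_on {0..pi} \<psi>" using assms(2) by (simp add: Psi_def)
  have g: "continuous_on {-1..1} g"
    unfolding g_def by (intro continuous_intros continuous_on_norm_gegenbauer) simp
  define J where "J = integral {-1..1} (\<lambda>x. \<psi> (arccos x) * g x)"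
  have "(\<lambda>j. bd j * (if j = n then N else 0)) sums J"
    using schoenberg_coeffs_integral_sums[OF _ assms(4) \<psi> g]
    unfolding J_def g_def N_def integral_norm_gegenbauer_orthogonal by simp
  moreover have "(\<lambda>j. bd j * (if j = n then N else 0)) sums (bd n * N)"
    using sums_single[of n "\<lambda>_. bd n * N"] by (simp add: if_distrib cong: if_cong)
  ultimately have "J = bd n * N" by (rule sums_unique2)
  have "(\<lambda>j. b2 j * (\<Sum>i\<le>k. if j = n + 2*i then u_coeff i n k * N else 0)) sums J"
    using schoenberg_coeffs_integral_sums[OF _ assms(3) \<psi> g]
    unfolding J_def g_def N_def integral_legendre_norm_gegenbauer by simp
  then have "J = (\<Sum>i\<le>k. b2 (n + 2*i) * (u_coeff i n k * N))"
    using sums_mult_sum_if_eq[of "{..k}" b2 "\<lambda>i. n + 2*i" "\<lambda>i. u_coeff i n k * N"]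
    by (simp add: sums_unique2)
  also have "\<dots> = (\<Sum>i\<le>k. u_coeff i n k * b2 (n + 2*i)) * N"
    by (simp add: sum_distrib_left sum_distrib_right mult_ac)
  finally have "bd n * N = (\<Sum>i\<le>k. u_coeff i n k * b2 (n + 2*i)) * N"
    using \<open>J = bd n * N\<close> by simp
  then show "bd n = (\<Sum>i\<le>k. u_coeff i n k * b2 (n + 2*i))"
    using gegenbauer_sqnorm_nonzero[of k n] by (simp add: N_def)
qed

end
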